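(* Let $\Theta$ be a saturated branch of a tableau of $\mathbf{TAB}_{\mathbf{IB}}$ and let $i$ be a quasi-urfather on $\Theta$. If $i\prec_\Theta j$, then $j\in\mathrm{dom}(v_\Theta)$.
   Context: Hybrid language: fix disjoint countably infinite sets $\mathbf{Prop}$ (propositional variables) and $\mathbf{Nom}$ (nominals). Formulas: $\varphi ::= p \mid i \mid \neg\varphi \mid \varphi\land\varphi \mid \Diamond\varphi \mid @_i\varphi$ with $p\in\mathbf{Prop}$, $i\in\mathbf{Nom}$; $\Box\varphi$ abbreviates $\neg\Diamond\neg\varphi$. Tableau calculus $\mathbf{TAB}_{\mathbf{IB}}$. A tableau is a well-founded tree whose nodes are formulas of the form $@_i\varphi$; its root is a formula $@_i\varphi$ (the root formula) where $i$ does not occur in $\varphi$. A branch is a maximal path; $\varphi\in\Theta$ means $\varphi$ occurs on branch $\Theta$. Each branch is extended by applying the rules below to its formulas as often as possible, except that no further formula is added to a branch once either (i) every new formula generated by applying any rule already occurs on the branch, or (ii) the branch is closed, i.e. contains $@_i\varphi$ and $@_i\neg\varphi$ for some formula $\varphi$ and nominal $i$. A branch is saturated if every new formula generated by applying some rule already occurs on it. An accessibility formula is a formula $@_i\Diamond j$ added by rule $[\Diamond]$ (with $j$ the new nominal). Rules (premises already on the branch; conclusions added to it): [$\neg\neg$] from $@_i\neg\neg\varphi$ add $@_i\varphi$; [$\land$] from $@_i(\varphi\land\psi)$ add $@_i\varphi$ and $@_i\psi$; [$\neg\land$] from $@_i\neg(\varphi\land\psi)$ split the branch into one extended by $@_i\neg\varphi$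 and one extended by $@_i\neg\psi$; [$\Diamond$] from $@_i\Diamond\varphi$, which is not an accessibility formula, add $@_i\Diamond j$ and $@_j\varphi$ where $j$ is a nominal not occurring on the branch; this rule is applied at most once per formula, and only if $i$ is a quasi-urfather on the branch (defined below); [$\neg\Diamond$] from $@_i\neg\Diamond\varphi$ and $@_i\Diamond j$ add $@_j\neg\varphi$; [$\Box_{sym}$] from $@_i\Box\varphi$ and $@_j\Diamond i$ add $@_j\varphi$; [$@$] from $@_i@_j\varphi$ add $@_j\varphi$; [$\neg@$] from $@_i\neg@_j\varphi$ add $@_j\neg\varphi$; [$Id$] from $@_i\varphi$, which is not an accessibility formula, and $@_i j$ add $@_j\varphi$; [$Ref$] for any nominal $i$ occurring on the branch add $@_i i$; ($\mathcal{I}$) for any nominal $i$ occurring on the branch add $@_i\neg\Diamond i$. Auxiliary notions for a branch $\Theta$. $@_i\varphi$ is a quasi-subformula of $@_j\psi$ if $\varphi$ is a subformula of $\psi$, or $\varphi=\neg\chi$ with $\chi$ a subformula of $\psi$. For a nominal $i$ occurring in $\Theta$, $T^\Theta(i)=\{\varphi \mid @_i\varphi\in\Theta$ and $@_i\varphi$ is a quasi-subformula of the root formula$\}$. Nominals $i,j$ are twins if $T^\Theta(i)=T^\Theta(j)$. $i\prec_\Theta j$ if $j$ was introduced by applying $[\Diamond]$ to a formula $@_i\Diamond\varphi$ (equivalently, the accessibility formula $@_i\Diamond j$ is in $\Theta$); $\prec_\Theta^*$ is its reflexive transitive closure. A nominal $i$ is a quasi-urfather on $\Theta$ if there are no twins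 $j\neq k$ with $j\prec_\Theta^* i$ and $k\prec_\Theta^* i$. The identity urfather $v_\Theta(i)$ of a nominal $i$ occurring in $\Theta$ is the earliest introduced nominal $j$ on $\Theta$ such that $j$ is a twin of $i$ and $j$ is a quasi-urfather; it may fail to exist, and $\mathrm{dom}(v_\Theta)$ denotes the set of nominals $i$ for which it exists. *)

theory Defs
  imports Main
begin

datatype fm =
    Pro nat
  | Nom nat
  | Neg fm
  | Con fm fm
  | Dia fm
  | At nat fm

abbreviation Box :: "fm \<Rightarrow> fm" where
  "Box \<phi> \<equiv> Neg (Dia (Neg \<phi>))"

fun nomsf :: "fm \<Rightarrow> nat set" where
  "nomsf (Pro p) = {}"
| "nomsf (Nom i) = {i}"
| "nomsf (Neg \<phi>) = nomsf \<phi>"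
| "nomsf (Con \<phi> \<psi>) = nomsf \<phi> \<union> nomsf \<psi>"
| "nomsf (Dia \<phi>) = nomsf \<phi>"
| "nomsf (At i \<phi>) = insert i (nomsf \<phi>)"

fun subfms :: "fm \<Rightarrow> fm set" where
  "subfms (Pro p) = {Pro p}"
| "subfms (Nom i) = {Nom i}"
| "subfms (Neg \<phi>) = insert (Neg \<phi>) (subfms \<phi>)"
| "subfms (Con \<phi> \<psi>) = insert (Con \<phi> \<psi>) (subfms \<phi> \<union> subfms \<psi>)"
| "subfms (Dia \<phi>) = insert (Dia \<phi>) (subfms \<phi>)"
| "subfms (At i \<phi>) = insert (At i \<phi>) (subfms \<phi>)"

text \<open>A (partial) branch is the list of formulas on it, in the order in which
they were added (the head is the root formula), together with the record of
all applications of rule [Dia]: a triple (i, phi, j) means that [Dia] was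
applied to the formula At i (Dia phi), introducing the new nominal j; it added
the accessibility formula At i (Dia (Nom j)) and At j phi.\<close>

type_synonym state = "fm list \<times> (nat \<times> fm \<times> nat) list"

definition F :: "state \<Rightarrow> fm list" where "F st = fst st"
definition D :: "state \<Rightarrow> (nat \<times> fm \<times> nat) list" where "D st = snd st"

definition on :: "fm \<Rightarrow> state \<Rightarrow> bool" where
  "on f st \<longleftrightarrow> f \<in> set (F st)"

definition root :: "state \<Rightarrow> fm" where
  "root st = hd (F st)"

definition noms :: "state \<Rightarrow> nat set" where
  "noms st = (\<Union>f\<in>set (F st). nomsf f)"

definition is_acc :: "state \<Rightarrow> fm \<Rightarrow> bool" where
  "is_acc st f \<longleftrightarrow> (\<exists>i j \<phi>. f = At i (Dia (Nom j)) \<and> (i, \<phi>, j) \<in> set (D st))"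

definition closed :: "state \<Rightarrow> bool" where
  "closed st \<longleftrightarrow> (\<exists>i \<phi>. on (At i \<phi>) st \<and> on (At i (Neg \<phi>)) st)"

definition quasi_sub :: "fm \<Rightarrow> fm \<Rightarrow> bool" where
  "quasi_sub f g \<longleftrightarrow> (\<exists>i \<phi> j \<psi>. f = At i \<phi> \<and> g = At j \<psi> \<and>
      (\<phi> \<in> subfms \<psi> \<or> (\<exists>\<chi>. \<phi> = Neg \<chi> \<and> \<chi> \<in> subfms \<psi>)))"

definition T :: "state \<Rightarrow> nat \<Rightarrow> fm set" where
  "T st i = {\<phi>. on (At i \<phi>) st \<and> quasi_sub (At i \<phi>) (root st)}"

definition twins :: "state \<Rightarrow> nat \<Rightarrow> nat \<Rightarrow> bool" where
  "twins st i j \<longleftrightarrow> i \<in> noms st \<and> j \<in> noms st \<and> T st i = T st j"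

definition prec :: "state \<Rightarrow> nat \<Rightarrow> nat \<Rightarrow> bool" where
  "prec st i j \<longleftrightarrow> (\<exists>\<phi>. (i, \<phi>, j) \<in> set (D st))"

definition quasi_urfather :: "state \<Rightarrow> nat \<Rightarrow> bool" where
  "quasi_urfather st i \<longleftrightarrow> i \<in> noms st \<and>
     \<not> (\<exists>j k. j \<noteq> k \<and> twins st j k \<and> (prec st)\<^sup>*\<^sup>* j i \<and> (prec st)\<^sup>*\<^sup>* k i)"

definition intro_pos :: "state \<Rightarrow> nat \<Rightarrow> nat" where
  "intro_pos st j = (LEAST n. n < length (F st) \<and> j \<in> nomsf (F st ! n))"

definition urf_cand :: "state \<Rightarrow> nat \<Rightarrow> nat \<Rightarrow> bool" where
  "urf_cand st i j \<longleftrightarrow> i \<in> noms st \<and> twins st j i \<and> quasi_urfather st j"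

text \<open>Identity urfather: the earliest introduced twin of i that is a
quasi-urfather (partial; ties among nominals introduced simultaneously in the
root formula are broken arbitrarily).\<close>
definition v :: "state \<Rightarrow> nat \<Rightarrow> nat option" where
  "v st i = (if \<exists>j. urf_cand st i j
             then Some (arg_min (intro_pos st) (urf_cand st i)) else None)"

text \<open>Each rule application is a list of alternatives; each alternative is a
list of formulas added to the branch together with the [Dia]-bookkeeping.
Only [neg-and] has two alternatives (branch split).\<close>

definition apps :: "state \<Rightarrow> ((fm list \<times> (nat \<times> fm \<times> nat) list) list) set" where
  "apps st =
     {[([At i \<phi>], [])] | i \<phi>. on (At i (Neg (Neg \<phi>))) st}
   \<union> {[([At i \<phi>, At i \<psi>], [])] | i \<phi> \<psi>. on (At i (Con \<phi> \<psi>)) st}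
   \<union> {[([At i (Neg \<phi>)], []), ([At i (Neg \<psi>)], [])] | i \<phi> \<psi>. on (At i (Neg (Con \<phi> \<psi>))) st}
   \<union> {[([At i (Dia (Nom j)), At j \<phi>], [(i, \<phi>, j)])] | i \<phi> j.
        on (At i (Dia \<phi>)) st \<and> \<not> is_acc st (At i (Dia \<phi>)) \<and> j \<notin> noms st
        \<and> (\<forall>k. (i, \<phi>, k) \<notin> set (D st)) \<and> quasi_urfather st i}
   \<union> {[([At j (Neg \<phi>)], [])] | i j \<phi>. on (At i (Neg (Dia \<phi>))) st \<and> on (At i (Dia (Nom j))) st}
   \<union> {[([At j \<phi>], [])] | i j \<phi>. on (At i (Box \<phi>)) st \<and> on (At j (Dia (Nom i))) st}
   \<union> {[([At j \<phi>], [])] | i j \<phi>. on (At i (At j \<phi>)) st}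
   \<union> {[([At j (Neg \<phi>)], [])] | i j \<phi>. on (At i (Neg (At j \<phi>))) st}
   \<union> {[([At j \<phi>], [])] | i j \<phi>. on (At i \<phi>) st \<and> \<not> is_acc st (At i \<phi>) \<and> on (At i (Nom j)) st}
   \<union> {[([At i (Nom i)], [])] | i. i \<in> noms st}
   \<union> {[([At i (Neg (Dia (Nom i)))], [])] | i. i \<in> noms st}"

definition saturated :: "state \<Rightarrow> bool" where
  "saturated st \<longleftrightarrow> (\<forall>A\<in>apps st. \<exists>(add, d)\<in>set A. set add \<subseteq> set (F st))"

inductive step :: "state \<Rightarrow> state \<Rightarrow> bool" where
  "\<lbrakk> \<not> closed st; \<not> saturated st; A \<in> apps st; (add, d) \<in> set A \<rbrakk>
   \<Longrightarrow> step st (F st @ add, D st @ d)"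

definition valid_root :: "fm \<Rightarrow> bool" where
  "valid_root r \<longleftrightarrow> (\<exists>i \<phi>. r = At i \<phi> \<and> i \<notin> nomsf \<phi>)"

text \<open>Theta is (an initial segment of) a branch of a TAB_IB tableau.\<close>
definition tab_branch :: "state \<Rightarrow> bool" where
  "tab_branch st \<longleftrightarrow> (\<exists>r. valid_root r \<and> step\<^sup>*\<^sup>* ([r], []) st)"

end

theory Submission
  imports Defs
begin

text \<open>Every nominal introduced by [\<Diamond>] is fresh, so it has exactly one \<open>\<prec>\<close>-parent.
Hence the \<open>\<prec>\<^sup>*\<close>-ancestors of a child \<open>j\<close> of \<open>i\<close> are \<open>j\<close> itself and the ancestors
of \<open>i\<close>. If \<open>j\<close> is not a quasi-urfather, two distinct twins lie among its ancestors;
as \<open>i\<close> is a quasi-urfather they cannot both be ancestors of \<open>i\<close>, so one of them is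
\<open>j\<close> and the other an ancestor \<open>k\<close> of \<open>i\<close>. Ancestors of quasi-urfathers are
quasi-urfathers, so \<open>k\<close> is a quasi-urfather twin of \<open>j\<close>, and \<open>v\<close> is defined at \<open>j\<close>.
Saturation of the branch plays no role.\<close>

definition prec_wf :: "state \<Rightarrow> bool" where
  "prec_wf st \<longleftrightarrow> (\<forall>i j. prec st i j \<longrightarrow> j \<in> noms st) \<and>
     (\<forall>i i' j. prec st i j \<longrightarrow> prec st i' j \<longrightarrow> i = i')"

lemma apps_dia_record:
  assumes "A \<in> apps st" "(add, d) \<in> set A"
  shows "d = [] \<or> (\<exists>i \<phi> j. d = [(i, \<phi>, j)] \<and> j \<notin> noms st \<and> At i (Dia (Nom j)) \<in> set add)"
  using assms unfolding apps_def by auto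

lemma step_prec_wf:
  assumes "step st st'" "prec_wf st"
  shows "prec_wf st'"
  using assms(1)
proof cases
  case (1 A add d)
  have noms': "noms st' = noms st \<union> (\<Union>f\<in>set add. nomsf f)"
    using 1(1) by (auto simp: noms_def F_def)
  have prec': "prec st' x y \<longleftrightarrow> prec st x y \<or> (\<exists>\<phi>. (x, \<phi>, y) \<in> set d)" for x y
    using 1(1) by (auto simp: prec_def D_def)
  from apps_dia_record[OF 1(4,5)] show ?thesis
  proof
    assume "d = []"
    then show ?thesis using assms(2) noms' prec' unfolding prec_wf_def by auto
  next
    assume "\<exists>i \<phi> j. d = [(i, \<phi>, j)] \<and> j \<notin> noms st \<and> At i (Dia (Nom j)) \<in> set add"
    then obtain i \<phi> j where d: "d = [(i, \<phi>, j)]" "j \<notin> noms st" "At i (Dia (Nom j)) \<in> set add"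
      by blast
    have "j \<in> noms st'" using noms' d(3) by force
    moreover have "\<not> prec st x j" for x
      using assms(2) d(2) unfolding prec_wf_def by blast
    ultimately show ?thesis using assms(2) noms' prec' d(1) unfolding prec_wf_def by auto
  qed
qed

lemma tab_branch_prec_wf:
  assumes "tab_branch st"
  shows "prec_wf st"
proof -
  obtain r where "step\<^sup>*\<^sup>* ([r], []) st" using assms unfolding tab_branch_def by blast
  moreover have "prec_wf ([r], [])" by (simp add: prec_wf_def prec_def D_def)
  ultimately show ?thesis by (induction rule: rtranclp_induct) (auto intro: step_prec_wf)
qed

lemma rtranclp_unique_predecessor:
  assumes "\<And>y. R y j \<Longrightarrow> y = i" "R\<^sup>*\<^sup>* x j"
  shows "x = j \<or> R\<^sup>*\<^sup>* x i"
  using assms(2) by cases (auto dest: assms(1))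

lemma twins_sym: "twins st i j \<Longrightarrow> twins st j i"
  by (auto simp: twins_def)

lemma quasi_urfather_ancestor:
  assumes "quasi_urfather st i" "(prec st)\<^sup>*\<^sup>* k i" "k \<in> noms st"
  shows "quasi_urfather st k"
  using assms unfolding quasi_urfather_def by (meson rtranclp_trans)

lemma child_of_quasi_urfather_has_quasi_urfather_twin:
  assumes "tab_branch st" "quasi_urfather st i" "prec st i j"
  obtains k where "twins st k j" "quasi_urfather st k"
proof -
  have wf: "prec_wf st" using assms(1) by (rule tab_branch_prec_wf)
  have j: "j \<in> noms st" using wf assms(3) unfolding prec_wf_def by blast
  have ancestor: "x = j \<or> (prec st)\<^sup>*\<^sup>* x i" if "(prec st)\<^sup>*\<^sup>* x j" for x
  proof (rule rtranclp_unique_predecessor[OF _ that])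
    show "y = i" if "prec st y j" for y
      using wf assms(3) that unfolding prec_wf_def by blast
  qed
  show ?thesis
  proof (cases "quasi_urfather st j")
    case True
    with j show ?thesis by (intro that[of j]) (auto simp: twins_def)
  next
    case False
    then obtain a b where ab: "a \<noteq> b" "twins st a b" "(prec st)\<^sup>*\<^sup>* a j" "(prec st)\<^sup>*\<^sup>* b j"
      using j unfolding quasi_urfather_def by blast
    have "\<not> ((prec st)\<^sup>*\<^sup>* a i \<and> (prec st)\<^sup>*\<^sup>* b i)"
      using assms(2) ab(1,2) unfolding quasi_urfather_def by blast
    then obtain k where k: "twins st k j" "(prec st)\<^sup>*\<^sup>* k i"
      using ancestor[OF ab(3)] ancestor[OF ab(4)] ab(1,2) twins_sym by metis
    have "k \<in> noms st" using k(1) by (simp add: twins_def)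
    with assms(2) k show ?thesis by (blast intro: that quasi_urfather_ancestor)
  qed
qed

lemma in_dom_v_if_quasi_urfather_twin:
  assumes "twins st k j" "quasi_urfather st k"
  shows "j \<in> dom (v st)"
proof -
  have "urf_cand st j k" using assms unfolding urf_cand_def twins_def by auto
  then show ?thesis unfolding v_def by auto
qed

theorem lemma6:
  assumes "tab_branch \<Theta>"
    and "saturated \<Theta>"
    and "quasi_urfather \<Theta> i"
    and "prec \<Theta> i j"
  shows "j \<in> dom (v \<Theta>)"
  using assms(1,3,4)
  by (rule child_of_quasi_urfather_has_quasi_urfather_twin) (rule in_dom_v_if_quasi_urfather_twin)

end
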